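(* Let $D$ be a torus invariant Weil divisor on the cyclic quotient singularity $X$, and let $u^0,\dots,u^r$ be the elements of $G(D)$, ordered so that $\langle u^0,\rho^0\rangle<\langle u^1,\rho^0\rangle<\dots<\langle u^r,\rho^0\rangle$. Let $\pi:\bigoplus_{i=0}^r R[-u^i]\to\Gamma(D)$ be the map $e^i\mapsto x^{u^i}$, and let \[ \iota:\bigoplus_{i=1}^r \big((x^{u^{i-1}})\cap(x^{u^i})\big)\to\bigoplus_{i=0}^r R[-u^i] \] be the map which on the $i$-th summand sends $x^u\mapsto x^{u-u^i}e^i-x^{u-u^{i-1}}e^{i-1}$. Then the sequence \[ 0\to\bigoplus_{i=1}^r\big((x^{u^{i-1}})\cap(x^{u^i})\big)\xrightarrow{\iota}\bigoplus_{i=0}^rR[-u^i]\xrightarrow{\pi}\Gamma(D)\to 0 \] is exact. Furthermore, each fractional ideal $(x^{u^{i-1}})\cap(x^{u^i})$ is divisorial, i.e. equal to $\Gamma(W)$ for some torus invariant Weil divisor $W$.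
   Context: Fix coprime integers $0<q<n$. Let $M=\mathbb Z^2$, $M_{\mathbb Q}=\mathbb Q^2$, with the standard scalar product $\langle\cdot,\cdot\rangle$. Put $\rho^0=(1,0)$, $\rho^1=(-q,n)$, $\sigma^\vee=\{u\in M_{\mathbb Q}:\langle u,\rho^0\rangle\ge 0,\ \langle u,\rho^1\rangle\ge 0\}$, $R=\mathbb C[\sigma^\vee\cap M]$ (monomials $x^u$), $X=\mathrm{Spec}\,R$. A torus invariant Weil divisor is $D=a_0[\rho^0]+a_1[\rho^1]$, $a_i\in\mathbb Z$, with section polyhedron $P_D=\{u\in M_{\mathbb Q}:\langle u,\rho^i\rangle\ge -a_i,\ i=0,1\}$ and global sections $\Gamma(D)=\bigoplus_{u\in P_D\cap M}\mathbb C\,x^u\subseteq\mathbb C[M]$, an $M$-graded $R$-module. $G(D)$ denotes the set of lattice points $u\in M$ lying on a compact edge of the convex hull $\mathrm{conv}(P_D\cap M)$ (these are the minimal homogeneous generators of $\Gamma(D)$). For $u\in M$, $R[-u]$ is the free $M$-graded $R$-module of rank one with basis element $e$ in degree $u$, and $(x^u)=x^uR\subseteq\mathbb C[M]$ is the principal fractional ideal. *)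

theory Defs
  imports "HOL-Analysis.Analysis" "HOL-Library.Poly_Mapping" "HOL-Library.Product_Plus"
begin

text \<open>The lattice M = Z^2 and Laurent polynomials C[M] (finitely supported functions M -> C,
  with convolution product).\<close>
type_synonym lat = "int \<times> int"
type_synonym lpoly = "lat \<Rightarrow>\<^sub>0 complex"

definition pair :: "lat \<Rightarrow> lat \<Rightarrow> int" where
  "pair u v = fst u * fst v + snd u * snd v"

definition rho0 :: lat where "rho0 = (1, 0)"
definition rho1 :: "int \<Rightarrow> int \<Rightarrow> lat" where "rho1 n q = (-q, n)"

definition xmon :: "lat \<Rightarrow> lpoly" where "xmon u = Poly_Mapping.single u 1"

definition sigma_dual_lat :: "int \<Rightarrow> int \<Rightarrow> lat set" where
  "sigma_dual_lat n q = {u. pair u rho0 \<ge> 0 \<and> pair u (rho1 n q) \<ge> 0}"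

text \<open>R = C[sigma^dual \<inter> M], as a subring of C[M]\<close>
definition Rring :: "int \<Rightarrow> int \<Rightarrow> lpoly set" where
  "Rring n q = {f. Poly_Mapping.keys f \<subseteq> sigma_dual_lat n q}"

text \<open>lattice points of the section polyhedron P_D, D = a0[rho0] + a1[rho1]\<close>
definition PD_lat :: "int \<Rightarrow> int \<Rightarrow> int \<Rightarrow> int \<Rightarrow> lat set" where
  "PD_lat n q a0 a1 = {u. pair u rho0 \<ge> -a0 \<and> pair u (rho1 n q) \<ge> -a1}"

definition Gamma :: "int \<Rightarrow> int \<Rightarrow> int \<Rightarrow> int \<Rightarrow> lpoly set" where
  "Gamma n q a0 a1 = {f. Poly_Mapping.keys f \<subseteq> PD_lat n q a0 a1}"

definition princ :: "int \<Rightarrow> int \<Rightarrow> lat \<Rightarrow> lpoly set" where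
  "princ n q u = {xmon u * f | f. f \<in> Rring n q}"

definition realpt :: "lat \<Rightarrow> real \<times> real" where
  "realpt u = (real_of_int (fst u), real_of_int (snd u))"

definition Gset :: "int \<Rightarrow> int \<Rightarrow> int \<Rightarrow> int \<Rightarrow> lat set" where
  "Gset n q a0 a1 = {u. \<exists>F. F face_of convex hull (realpt ` PD_lat n q a0 a1) \<and> compact F \<and> realpt u \<in> F}"

end

theory Submission
  imports Defs
begin

text \<open>In the coordinates \<open>\<langle>p, \<rho>\<^sup>0\<rangle> = fst p\<close> and \<open>\<langle>p, \<rho>\<^sup>1\<rangle>\<close> the polyhedron \<open>P\<^sub>D\<close> is a
  translated quadrant and \<open>\<sigma>\<^sup>\<or>\<close> the quadrant itself, so \<open>\<Gamma>(D)\<close>, \<open>R\<close> and the ideals \<open>(x^u)\<close> are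
  spanned by the monomials with exponents in such quadrants.

  The points of \<open>G(D)\<close> are exactly the lattice points of \<open>P\<^sub>D\<close> that are minimal for the
  quadrant order. If a lattice point \<open>v\<close> of \<open>P\<^sub>D\<close> lay below \<open>u\<close>, the ray from \<open>v\<close> through \<open>u\<close>
  would stay in \<open>P\<^sub>D\<close> and \<open>u\<close> would be interior to segments reaching arbitrarily far along it,
  so \<open>u\<close> would lie on no bounded face. Conversely, seen from a minimal point, the slopes of the
  lattice points to its upper left do not exceed those of the points to its lower right; a
  slope in between gives a linear form with positive weights that is minimized at the point and
  has a finite level set in \<open>P\<^sub>D\<close>, whose convex hull is the required compact face.

  Hence the \<open>u\<^sup>i\<close> form a staircase. Every exponent of \<open>\<Gamma>(D)\<close> lies above some \<open>u\<^sup>i\<close>, so \<open>\<pi>\<close> is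
  onto, and \<open>(x^u\<^sup>i\<^sup>-\<^sup>1) \<inter> (x^u\<^sup>i)\<close> is the quadrant module above the corner
  \<open>(\<langle>u\<^sup>i, \<rho>\<^sup>0\<rangle>, \<langle>u\<^sup>i\<^sup>-\<^sup>1, \<rho>\<^sup>1\<rangle>)\<close>. A relation \<open>\<Sum>\<^sub>i x^u\<^sup>i f\<^sub>i = 0\<close> is the image under \<open>\<iota>\<close> of its
  tail sums \<open>\<Sum>\<^sub>j\<^sub>\<ge>\<^sub>i x^u\<^sup>j f\<^sub>j\<close>; these equal minus the complementary head sums, so their
  exponents lie above both \<open>u\<^sup>i\<^sup>-\<^sup>1\<close> and \<open>u\<^sup>i\<close>.\<close>

section \<open>Monomials and quadrant coordinates\<close>

lemma lookup_xmon_mult: "Poly_Mapping.lookup (xmon u * f) w = Poly_Mapping.lookup f (w - u)"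
proof -
  have "Poly_Mapping.lookup (xmon u * f) w
      = Sum_any (\<lambda>l. Poly_Mapping.lookup (xmon u) l * Sum_any (\<lambda>p. Poly_Mapping.lookup f p when w = l + p))"
    by (rule lookup_mult)
  also have "\<dots> = Sum_any (\<lambda>p. Poly_Mapping.lookup f p when w = u + p)"
  proof -
    have "Poly_Mapping.lookup (xmon u) l * Sum_any (\<lambda>p. Poly_Mapping.lookup f p when w = l + p)
        = (Sum_any (\<lambda>p. Poly_Mapping.lookup f p when w = u + p) when l = u)" for l
      by (simp add: xmon_def lookup_single when_def)
    then show ?thesis by simp
  qed
  also have "\<dots> = Sum_any (\<lambda>p. Poly_Mapping.lookup f p when p = w - u)"
    by (rule Sum_any.cong) (auto simp: when_def algebra_simps)
  finally show ?thesis by simp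
qed

lemma keys_xmon_mult: "w \<in> Poly_Mapping.keys (xmon u * f) \<longleftrightarrow> w - u \<in> Poly_Mapping.keys f"
  by (simp add: in_keys_iff lookup_xmon_mult)

lemma xmon_mult_xmon: "xmon a * xmon b = xmon (a + b)"
  by (simp add: xmon_def mult_single)

lemma xmon_zero: "xmon 0 = 1"
  by (simp add: xmon_def)

lemma xmon_uminus_cancel:
  "xmon (- a) * (xmon a * f) = f" "xmon a * (xmon (- a) * f) = f"
  by (simp_all add: mult.assoc[symmetric] xmon_mult_xmon xmon_zero)

lemma xmon_mult_left_cancel: "xmon a * f = xmon a * g \<longleftrightarrow> f = g"
  by (metis xmon_uminus_cancel(1))

lemma keys_sumE:
  assumes "w \<in> Poly_Mapping.keys (sum f A)"
  obtains i where "i \<in> A" "w \<in> Poly_Mapping.keys (f i)"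
  using assms keys_sum[of f A] by blast

definition coord1 :: "int \<Rightarrow> int \<Rightarrow> lat \<Rightarrow> int" where
  "coord1 n q p = n * snd p - q * fst p"

lemma pair_rho0 [simp]: "pair p rho0 = fst p"
  by (simp add: pair_def rho0_def)

lemma pair_rho1 [simp]: "pair p (rho1 n q) = coord1 n q p"
  by (simp add: pair_def rho1_def coord1_def)

lemma coord1_add [simp]: "coord1 n q (a + b) = coord1 n q a + coord1 n q b"
  and coord1_diff [simp]: "coord1 n q (a - b) = coord1 n q a - coord1 n q b"
  by (simp_all add: coord1_def algebra_simps)

lemma coord1_eq_imp_eq:
  assumes "n > 0" "fst p = fst p'" "coord1 n q p = coord1 n q p'"
  shows "p = p'"
  using assms by (simp add: coord1_def prod_eq_iff)

lemma sigma_dual_lat_iff: "p \<in> sigma_dual_lat n q \<longleftrightarrow> 0 \<le> fst p \<and> 0 \<le> coord1 n q p"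
  by (simp add: sigma_dual_lat_def)

lemma PD_lat_iff: "p \<in> PD_lat n q a0 a1 \<longleftrightarrow> - a0 \<le> fst p \<and> - a1 \<le> coord1 n q p"
  by (simp add: PD_lat_def)

lemma Rring_iff: "f \<in> Rring n q \<longleftrightarrow> (\<forall>w\<in>Poly_Mapping.keys f. 0 \<le> fst w \<and> 0 \<le> coord1 n q w)"
  by (auto simp: Rring_def sigma_dual_lat_iff)

lemma Gamma_iff:
  "f \<in> Gamma n q a0 a1 \<longleftrightarrow> (\<forall>w\<in>Poly_Mapping.keys f. - a0 \<le> fst w \<and> - a1 \<le> coord1 n q w)"
  by (auto simp: Gamma_def PD_lat_iff)

lemma princ_iff:
  "f \<in> princ n q u \<longleftrightarrow> (\<forall>w\<in>Poly_Mapping.keys f. fst u \<le> fst w \<and> coord1 n q u \<le> coord1 n q w)"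
proof
  assume "f \<in> princ n q u"
  then obtain g where "g \<in> Rring n q" "f = xmon u * g"
    by (auto simp: princ_def)
  then show "\<forall>w\<in>Poly_Mapping.keys f. fst u \<le> fst w \<and> coord1 n q u \<le> coord1 n q w"
    by (force simp: keys_xmon_mult Rring_iff)
next
  assume "\<forall>w\<in>Poly_Mapping.keys f. fst u \<le> fst w \<and> coord1 n q u \<le> coord1 n q w"
  then have "xmon (- u) * f \<in> Rring n q"
    by (force simp: Rring_iff keys_xmon_mult)
  moreover have "f = xmon u * (xmon (- u) * f)"
    by (simp add: xmon_uminus_cancel)
  ultimately show "f \<in> princ n q u"
    unfolding princ_def by blast
qed

lemma princ_Int_princ_eq_Gamma:
  assumes "fst u \<le> fst v" "coord1 n q v \<le> coord1 n q u"
  shows "princ n q u \<inter> princ n q v = Gamma n q (- fst v) (- coord1 n q u)"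
  using assms unfolding set_eq_iff Int_iff princ_iff Gamma_iff by (fastforce intro: order_trans)

section \<open>The points of \<open>G(D)\<close> are the minimal points of \<open>P\<^sub>D\<close>\<close>

lemma bounded_ray_eq_0:
  fixes a d :: "'a::real_normed_vector"
  assumes "bounded S" and ray: "\<And>k::nat. 2 \<le> k \<Longrightarrow> a + real k *\<^sub>R d \<in> S"
  shows "d = 0"
proof (rule ccontr)
  assume "d \<noteq> 0"
  obtain B where B: "\<And>x. x \<in> S \<Longrightarrow> norm x \<le> B"
    using assms(1) bounded_iff by blast
  obtain k0 :: nat where "(B + norm a) / norm d < real k0"
    using reals_Archimedean2 by blast
  define k where "k = max k0 2"
  have k: "(B + norm a) / norm d < real k" "2 \<le> k"
    using \<open>(B + norm a) / norm d < real k0\<close> by (auto simp: k_def)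
  have "real k * norm d = norm ((a + real k *\<^sub>R d) - a)"
    by simp
  also have "\<dots> \<le> norm (a + real k *\<^sub>R d) + norm a"
    by (rule norm_triangle_ineq4)
  also have "\<dots> \<le> B + norm a"
    using B[OF ray[OF k(2)]] by simp
  moreover have "B + norm a < real k * norm d"
    using k(1) \<open>d \<noteq> 0\<close> by (simp add: divide_less_eq)
  ultimately show False
    by linarith
qed

lemma face_of_bounded_ray_eq_0:
  fixes a d :: "'a::real_normed_vector"
  assumes face: "F face_of C" and "bounded F" and "a + d \<in> F"
    and ray: "\<And>k::nat. a + real k *\<^sub>R d \<in> C"
  shows "d = 0"
proof (rule ccontr)
  assume "d \<noteq> 0"
  have "a + real k *\<^sub>R d \<in> F" if "2 \<le> k" for k
  proof -
    have "a + d = (1 - 1 / real k) *\<^sub>R a + (1 / real k) *\<^sub>R (a + real k *\<^sub>R d)"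
      using that by (simp add: algebra_simps)
    then have "a + d \<in> open_segment a (a + real k *\<^sub>R d)"
      using that \<open>d \<noteq> 0\<close> unfolding in_segment by (intro conjI exI[of _ "1 / real k"]) auto
    moreover have "a \<in> C"
      using ray[of 0] by simp
    ultimately show ?thesis
      using face_ofD[OF face] \<open>a + d \<in> F\<close> ray by blast
  qed
  then show False
    using bounded_ray_eq_0[OF \<open>bounded F\<close>] \<open>d \<noteq> 0\<close> by blast
qed

lemma convex_hull_Int_supporting_hyperplane:
  fixes S :: "'a::real_inner set"
  assumes ge: "\<And>x. x \<in> S \<Longrightarrow> k \<le> a \<bullet> x"
  shows "convex hull S \<inter> {x. a \<bullet> x = k} = convex hull (S \<inter> {x. a \<bullet> x = k})"
proof
  show "convex hull (S \<inter> {x. a \<bullet> x = k}) \<subseteq> convex hull S \<inter> {x. a \<bullet> x = k}"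
    by (intro Int_greatest hull_mono hull_minimal) (auto simp: convex_hyperplane)
  show "convex hull S \<inter> {x. a \<bullet> x = k} \<subseteq> convex hull (S \<inter> {x. a \<bullet> x = k})"
  proof
    fix x assume "x \<in> convex hull S \<inter> {x. a \<bullet> x = k}"
    then have x: "x \<in> convex hull S" "a \<bullet> x = k" by auto
    obtain T w where T: "finite T" "T \<subseteq> S" "\<And>v. v \<in> T \<Longrightarrow> 0 \<le> w v" "sum w T = 1"
      "(\<Sum>v\<in>T. w v *\<^sub>R v) = x"
      using x(1) unfolding convex_hull_explicit by blast
    have "(\<Sum>v\<in>T. w v * (a \<bullet> v - k)) = a \<bullet> x - k * sum w T"
      unfolding T(5)[symmetric] by (simp add: inner_sum_right algebra_simps sum_subtractf sum_distrib_left)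
    then have "(\<Sum>v\<in>T. w v * (a \<bullet> v - k)) = 0"
      using x(2) T(4) by simp
    moreover have "\<And>v. v \<in> T \<Longrightarrow> 0 \<le> w v * (a \<bullet> v - k)"
      using T(2,3) ge by (meson diff_ge_0_iff_ge mult_nonneg_nonneg subsetD)
    ultimately have "w v * (a \<bullet> v - k) = 0" if "v \<in> T" for v
      using sum_nonneg_eq_0_iff[OF T(1), of "\<lambda>v. w v * (a \<bullet> v - k)"] that by blast
    then have off: "w v = 0" if "v \<in> T" "a \<bullet> v \<noteq> k" for v
      using that by fastforce
    define T' where "T' = T \<inter> {x. a \<bullet> x = k}"
    have "sum w T' = sum w T"
      by (rule sum.mono_neutral_left) (use T(1) off in \<open>auto simp: T'_def\<close>)
    have "(\<Sum>v\<in>T'. w v *\<^sub>R v) = (\<Sum>v\<in>T. w v *\<^sub>R v)"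
      by (rule sum.mono_neutral_left) (use T(1) off in \<open>auto simp: T'_def\<close>)
    moreover have "(\<Sum>v\<in>T'. w v *\<^sub>R v) \<in> convex hull (S \<inter> {x. a \<bullet> x = k})"
      using T \<open>sum w T' = sum w T\<close> by (intro convex_sum) (auto simp: T'_def intro: hull_inc)
    ultimately show "x \<in> convex hull (S \<inter> {x. a \<bullet> x = k})"
      using T(5) by simp
  qed
qed

lemma compact_face_of_finite_level:
  fixes S :: "'a::euclidean_space set"
  assumes ge: "\<And>x. x \<in> S \<Longrightarrow> k \<le> a \<bullet> x" and fin: "finite (S \<inter> {x. a \<bullet> x = k})"
  shows "convex hull S \<inter> {x. a \<bullet> x = k} face_of convex hull S"
    and "compact (convex hull S \<inter> {x. a \<bullet> x = k})"
proof -
  have "convex hull S \<subseteq> {x. k \<le> a \<bullet> x}"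
    using ge by (intro hull_minimal) (auto simp: convex_halfspace_ge)
  then show "convex hull S \<inter> {x. a \<bullet> x = k} face_of convex hull S"
    by (intro face_of_Int_supporting_hyperplane_ge) auto
  have "convex hull S \<inter> {x. a \<bullet> x = k} = convex hull (S \<inter> {x. a \<bullet> x = k})"
    by (rule convex_hull_Int_supporting_hyperplane) (rule ge)
  then show "compact (convex hull S \<inter> {x. a \<bullet> x = k})"
    using fin by (simp add: compact_convex_hull finite_imp_compact)
qed

lemma realpt_add: "realpt (a + b) = realpt a + realpt b"
  by (simp add: realpt_def)

lemma convex_hull_PD_lat_subset:
  "convex hull (realpt ` PD_lat n q a0 a1)
     \<subseteq> {x. - real_of_int a0 \<le> fst x \<and> - real_of_int a1 \<le> real_of_int n * snd x - real_of_int q * fst x}"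
proof (rule hull_minimal)
  have "{x::real \<times> real. - real_of_int a0 \<le> fst x \<and> - real_of_int a1 \<le> real_of_int n * snd x - real_of_int q * fst x}
      = {x. (1, 0) \<bullet> x \<ge> - real_of_int a0} \<inter> {x. (- real_of_int q, real_of_int n) \<bullet> x \<ge> - real_of_int a1}"
    by (auto simp: inner_prod_def)
  then show "convex {x. - real_of_int a0 \<le> fst x \<and> - real_of_int a1 \<le> real_of_int n * snd x - real_of_int q * fst x}"
    by (simp add: convex_Int convex_halfspace_ge)
  show "realpt ` PD_lat n q a0 a1
      \<subseteq> {x. - real_of_int a0 \<le> fst x \<and> - real_of_int a1 \<le> real_of_int n * snd x - real_of_int q * fst x}"
  proof
    fix x assume "x \<in> realpt ` PD_lat n q a0 a1"
    then obtain p where "p \<in> PD_lat n q a0 a1" "x = realpt p" by blast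
    then have "real_of_int (- a0) \<le> real_of_int (fst p)"
      "real_of_int (- a1) \<le> real_of_int (n * snd p - q * fst p)"
      unfolding PD_lat_iff coord1_def of_int_le_iff by auto
    then show "x \<in> {x. - real_of_int a0 \<le> fst x \<and> - real_of_int a1 \<le> real_of_int n * snd x - real_of_int q * fst x}"
      using \<open>x = realpt p\<close> by (simp add: realpt_def)
  qed
qed

lemma Gset_subset_PD_lat: "Gset n q a0 a1 \<subseteq> PD_lat n q a0 a1"
proof
  fix u assume "u \<in> Gset n q a0 a1"
  then have "realpt u \<in> convex hull (realpt ` PD_lat n q a0 a1)"
    unfolding Gset_def using face_of_imp_subset by blast
  then have "realpt u \<in> {x. - real_of_int a0 \<le> fst x \<and>
      - real_of_int a1 \<le> real_of_int n * snd x - real_of_int q * fst x}"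
    using convex_hull_PD_lat_subset by blast
  then have "real_of_int (- a0) \<le> real_of_int (fst u)"
    "real_of_int (- a1) \<le> real_of_int (n * snd u - q * fst u)"
    by (simp_all add: realpt_def)
  then show "u \<in> PD_lat n q a0 a1"
    unfolding PD_lat_iff coord1_def of_int_le_iff by blast
qed

definition minimal_points :: "int \<Rightarrow> int \<Rightarrow> int \<Rightarrow> int \<Rightarrow> lat set" where
  "minimal_points n q a0 a1 = {m \<in> PD_lat n q a0 a1. \<forall>p \<in> PD_lat n q a0 a1.
     fst p \<le> fst m \<longrightarrow> coord1 n q p \<le> coord1 n q m \<longrightarrow> p = m}"

lemma Gset_subset_minimal_points: "Gset n q a0 a1 \<subseteq> minimal_points n q a0 a1"
proof
  fix u assume u: "u \<in> Gset n q a0 a1"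
  obtain F where F: "F face_of convex hull (realpt ` PD_lat n q a0 a1)" "compact F" "realpt u \<in> F"
    using u by (auto simp: Gset_def)
  have "v = u" if v: "v \<in> PD_lat n q a0 a1" "fst v \<le> fst u" "coord1 n q v \<le> coord1 n q u" for v
  proof -
    define s where "s = u - v"
    have "(fst v + int k * fst s, snd v + int k * snd s) \<in> PD_lat n q a0 a1" for k
    proof -
      have "0 \<le> int k * fst s" "0 \<le> int k * coord1 n q s"
        using v(2,3) by (simp_all add: s_def)
      moreover have "coord1 n q (fst v + int k * fst s, snd v + int k * snd s)
          = coord1 n q v + int k * coord1 n q s"
        by (simp add: coord1_def algebra_simps)
      ultimately show ?thesis
        using v(1) by (simp add: PD_lat_iff)
    qed
    then have "realpt v + real k *\<^sub>R realpt s \<in> convex hull (realpt ` PD_lat n q a0 a1)" for k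
      by (force simp: realpt_def intro: hull_inc)
    moreover have "realpt v + realpt s \<in> F"
      using F(3) by (simp add: s_def realpt_add[symmetric])
    ultimately have "realpt s = 0"
      using face_of_bounded_ray_eq_0[OF F(1) compact_imp_bounded[OF F(2)]] by blast
    then show "v = u"
      by (simp add: s_def realpt_def prod_eq_iff)
  qed
  then show "u \<in> minimal_points n q a0 a1"
    using u Gset_subset_PD_lat unfolding minimal_points_def by blast
qed

lemma ex_minimal_point_below:
  assumes "n > 0" and w: "w \<in> PD_lat n q a0 a1"
  obtains m where "m \<in> minimal_points n q a0 a1" "fst m \<le> fst w" "coord1 n q m \<le> coord1 n q w"
proof -
  let ?below = "\<lambda>p. p \<in> PD_lat n q a0 a1 \<and> fst p \<le> fst w \<and> coord1 n q p \<le> coord1 n q w"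
  let ?height = "\<lambda>p. nat (fst p + coord1 n q p + a0 + a1)"
  obtain m where m: "?below m" and least: "\<And>p. ?below p \<Longrightarrow> ?height m \<le> ?height p"
    using ex_has_least_nat[of ?below w ?height] w by auto
  have "p = m" if p: "p \<in> PD_lat n q a0 a1" "fst p \<le> fst m" "coord1 n q p \<le> coord1 n q m" for p
  proof -
    have "?height m \<le> ?height p"
      using p m by (intro least) auto
    then have "fst p = fst m" "coord1 n q p = coord1 n q m"
      using p m by (auto simp: PD_lat_iff)
    then show "p = m"
      using coord1_eq_imp_eq[OF \<open>n > 0\<close>] by blast
  qed
  then show ?thesis
    using that m unfolding minimal_points_def by blast
qed

lemma minimal_points_antimono:
  assumes "m \<in> minimal_points n q a0 a1" "m' \<in> minimal_points n q a0 a1" "fst m \<le> fst m'"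
  shows "coord1 n q m' \<le> coord1 n q m"
proof (rule ccontr)
  assume "\<not> coord1 n q m' \<le> coord1 n q m"
  moreover have "m \<in> PD_lat n q a0 a1"
    using assms(1) by (simp add: minimal_points_def)
  ultimately have "m = m'"
    using assms(2,3) unfolding minimal_points_def by auto
  then show False
    using \<open>\<not> coord1 n q m' \<le> coord1 n q m\<close> by simp
qed

text \<open>If the inequality failed for \<open>p\<close> and \<open>r\<close>, then \<open>p + r - m\<close> would be a lattice point of
  \<open>P\<^sub>D\<close> nearer to \<open>m\<close> that either lies below \<open>m\<close> or makes it fail again.\<close>
lemma minimal_point_slopes:
  assumes m: "m \<in> minimal_points n q a0 a1"
    and "p \<in> PD_lat n q a0 a1" "r \<in> PD_lat n q a0 a1"
    and "fst p < fst m" "coord1 n q m < coord1 n q p"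
    and "fst m < fst r" "coord1 n q r < coord1 n q m"
  shows "(fst p - fst m) * (coord1 n q r - coord1 n q m)
           \<le> (fst r - fst m) * (coord1 n q p - coord1 n q m)"
  using assms(2-)
proof (induction "nat (fst r - fst m + coord1 n q p - coord1 n q m)" arbitrary: p r
    rule: less_induct)
  case less
  define x1 where "x1 = fst p - fst m"
  define y1 where "y1 = coord1 n q p - coord1 n q m"
  define x2 where "x2 = fst r - fst m"
  define y2 where "y2 = coord1 n q r - coord1 n q m"
  define t where "t = p + r - m"
  have t: "fst t - fst m = x1 + x2" "coord1 n q t - coord1 n q m = y1 + y2"
    by (simp_all add: t_def x1_def x2_def y1_def y2_def)
  have t_PD: "t \<in> PD_lat n q a0 a1"
    using less.prems t unfolding PD_lat_iff x1_def x2_def y1_def y2_def by linarith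
  have signs: "x1 < 0" "0 < y1" "0 < x2" "y2 < 0"
    using less.prems by (auto simp: x1_def x2_def y1_def y2_def)
  consider "x1 + x2 \<le> 0" "y1 + y2 \<le> 0" | "0 < x1 + x2" "y1 + y2 < 0"
    | "x1 + x2 < 0" "0 < y1 + y2" | "0 \<le> x1 + x2" "0 \<le> y1 + y2"
    by linarith
  then have "x1 * y2 \<le> x2 * y1"
  proof cases
    case 1
    then have "t = m"
      using m t_PD t unfolding minimal_points_def by auto
    then have "x1 = - x2" "y1 = - y2"
      using t by simp_all
    then show ?thesis
      by simp
  next
    case 2
    have "(fst p - fst m) * (coord1 n q t - coord1 n q m)
        \<le> (fst t - fst m) * (coord1 n q p - coord1 n q m)"
      by (rule less.hyps) (use less.prems t_PD t 2 signs in \<open>auto simp: x2_def y2_def\<close>)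
    then have "x1 * (y1 + y2) \<le> (x1 + x2) * y1"
      using t by (simp add: x1_def y1_def)
    then show ?thesis
      by (simp add: algebra_simps)
  next
    case 3
    have "(fst t - fst m) * (coord1 n q r - coord1 n q m)
        \<le> (fst r - fst m) * (coord1 n q t - coord1 n q m)"
      by (rule less.hyps) (use less.prems t_PD t 3 signs in \<open>auto simp: x1_def y1_def\<close>)
    then have "(x1 + x2) * y2 \<le> x2 * (y1 + y2)"
      using t by (simp add: x2_def y2_def)
    then show ?thesis
      by (simp add: algebra_simps)
  next
    case 4
    have "0 \<le> x2 * (y1 + y2)" "y2 * (x1 + x2) \<le> 0"
      using 4 signs by (simp_all add: mult_nonpos_nonneg)
    then show ?thesis
      by (simp add: algebra_simps)
  qed
  then show ?case
    by (simp add: x1_def x2_def y1_def y2_def)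
qed

lemma ex_pos_separating:
  fixes U L :: "real set"
  assumes sep: "\<And>x y. x \<in> U \<Longrightarrow> y \<in> L \<Longrightarrow> x \<le> y" and "bdd_above U"
    and e_le: "\<And>y. y \<in> L \<Longrightarrow> e \<le> y" and "0 < e"
  obtains c where "0 < c" "\<And>x. x \<in> U \<Longrightarrow> x \<le> c" "\<And>y. y \<in> L \<Longrightarrow> c \<le> y"
proof
  have bdd: "bdd_above (insert e U)"
    using assms(2) by simp
  show "0 < Sup (insert e U)"
    using cSup_upper[OF insertI1 bdd] \<open>0 < e\<close> by linarith
  show "x \<le> Sup (insert e U)" if "x \<in> U" for x
    using cSup_upper[OF _ bdd] that by blast
  show "Sup (insert e U) \<le> y" if "y \<in> L" for y
    using that sep e_le by (intro cSup_least) auto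
qed

definition slope :: "int \<Rightarrow> int \<Rightarrow> lat \<Rightarrow> lat \<Rightarrow> real" where
  "slope n q m p = real_of_int (fst m - fst p) / real_of_int (coord1 n q p - coord1 n q m)"

lemma minimal_point_supported:
  assumes m: "m \<in> minimal_points n q a0 a1" and "0 < c"
    and upper: "\<And>p. p \<in> PD_lat n q a0 a1 \<Longrightarrow> fst p < fst m \<Longrightarrow> coord1 n q m < coord1 n q p \<Longrightarrow>
      slope n q m p \<le> c"
    and lower: "\<And>r. r \<in> PD_lat n q a0 a1 \<Longrightarrow> fst m < fst r \<Longrightarrow> coord1 n q r < coord1 n q m \<Longrightarrow>
      c \<le> slope n q m r"
    and p: "p \<in> PD_lat n q a0 a1"
  shows "0 \<le> real_of_int (fst p - fst m) + c * real_of_int (coord1 n q p - coord1 n q m)"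
proof -
  consider "fst p \<le> fst m" "coord1 n q p \<le> coord1 n q m"
    | "fst p < fst m" "coord1 n q m < coord1 n q p"
    | "fst m < fst p" "coord1 n q p < coord1 n q m"
    | "fst m \<le> fst p" "coord1 n q m \<le> coord1 n q p"
    by linarith
  then show ?thesis
  proof cases
    case 1
    then have "p = m"
      using m p by (simp add: minimal_points_def)
    then show ?thesis
      by simp
  next
    case 2
    then have "real_of_int (fst m - fst p) \<le> c * real_of_int (coord1 n q p - coord1 n q m)"
      using upper[OF p] by (simp add: slope_def pos_divide_le_eq)
    then show ?thesis
      by (simp add: algebra_simps)
  next
    case 3
    then have "real_of_int (fst m - fst p) \<le> c * real_of_int (coord1 n q p - coord1 n q m)"
      using lower[OF p] by (simp add: slope_def neg_le_divide_eq)
    then show ?thesis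
      by (simp add: algebra_simps)
  next
    case 4
    then show ?thesis
      using \<open>0 < c\<close> by simp
  qed
qed

lemma minimal_point_supporting_slope:
  assumes m: "m \<in> minimal_points n q a0 a1"
  obtains c :: real where "0 < c"
    "\<And>p. p \<in> PD_lat n q a0 a1 \<Longrightarrow>
       0 \<le> real_of_int (fst p - fst m) + c * real_of_int (coord1 n q p - coord1 n q m)"
proof -
  define U where "U = slope n q m ` {p \<in> PD_lat n q a0 a1. fst p < fst m \<and> coord1 n q m < coord1 n q p}"
  define L where "L = slope n q m ` {r \<in> PD_lat n q a0 a1. fst m < fst r \<and> coord1 n q r < coord1 n q m}"
  have "m \<in> PD_lat n q a0 a1"
    using m by (simp add: minimal_points_def)
  then have m_ht: "0 \<le> fst m + a0" "0 \<le> coord1 n q m + a1"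
    by (auto simp: PD_lat_iff)
  have sep: "x \<le> y" if xy: "x \<in> U" "y \<in> L" for x y
  proof -
    obtain p r where p: "p \<in> PD_lat n q a0 a1" "fst p < fst m" "coord1 n q m < coord1 n q p"
      and r: "r \<in> PD_lat n q a0 a1" "fst m < fst r" "coord1 n q r < coord1 n q m"
      and slopes: "x = slope n q m p" "y = slope n q m r"
      using xy unfolding U_def L_def by blast
    have "(fst p - fst m) * (coord1 n q r - coord1 n q m)
        \<le> (fst r - fst m) * (coord1 n q p - coord1 n q m)"
      by (rule minimal_point_slopes[OF m p(1) r(1) p(2,3) r(2,3)])
    then have "real_of_int ((fst p - fst m) * (coord1 n q r - coord1 n q m))
        \<le> real_of_int ((fst r - fst m) * (coord1 n q p - coord1 n q m))"
      by (simp only: of_int_le_iff)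
    then show ?thesis
      using p(3) r(3) unfolding slopes slope_def by (simp add: field_simps)
  qed
  have bdd: "bdd_above U"
  proof (rule bdd_aboveI)
    fix x assume "x \<in> U"
    then obtain p where p: "p \<in> PD_lat n q a0 a1" "fst p < fst m" "coord1 n q m < coord1 n q p"
      and "x = slope n q m p"
      unfolding U_def by blast
    have "slope n q m p \<le> real_of_int (fst m - fst p) / 1"
      unfolding slope_def using p by (intro divide_left_mono) auto
    then show "x \<le> real_of_int (fst m + a0)"
      using p(1) \<open>x = slope n q m p\<close> by (simp add: PD_lat_iff)
  qed
  \<comment> \<open>This bound keeps \<open>c\<close> positive when no lattice point lies to the upper left of \<open>m\<close>.\<close>
  have e_le: "1 / (1 + real_of_int (coord1 n q m + a1)) \<le> y" if y: "y \<in> L" for y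
  proof -
    obtain r where r: "r \<in> PD_lat n q a0 a1" "fst m < fst r" "coord1 n q r < coord1 n q m"
      and "y = slope n q m r"
      using y unfolding L_def by blast
    have "y = real_of_int (fst r - fst m) / real_of_int (coord1 n q m - coord1 n q r)"
      unfolding \<open>y = slope n q m r\<close> slope_def by (metis minus_diff_eq minus_divide_divide of_int_minus)
    moreover have "1 \<le> real_of_int (fst r - fst m)"
      "real_of_int (coord1 n q m - coord1 n q r) \<le> 1 + real_of_int (coord1 n q m + a1)"
      "0 < real_of_int (coord1 n q m - coord1 n q r)"
      using r by (auto simp: PD_lat_iff)
    ultimately show ?thesis
      by (simp add: frac_le)
  qed
  have e_pos: "0 < 1 / (1 + real_of_int (coord1 n q m + a1))"
    using m_ht by simp
  obtain c where c: "0 < c" "\<And>x. x \<in> U \<Longrightarrow> x \<le> c" "\<And>y. y \<in> L \<Longrightarrow> c \<le> y"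
    using ex_pos_separating[OF sep bdd e_le e_pos] by blast
  show ?thesis
  proof (rule that[OF c(1)])
    fix p assume "p \<in> PD_lat n q a0 a1"
    then show "0 \<le> real_of_int (fst p - fst m) + c * real_of_int (coord1 n q p - coord1 n q m)"
      by (rule minimal_point_supported[OF m c(1), rotated 2]) (auto simp: U_def L_def intro: c(2,3))
  qed
qed

lemma finite_PD_lat_bounded:
  assumes "n > 0"
  shows "finite {p \<in> PD_lat n q a0 a1. fst p \<le> A \<and> coord1 n q p \<le> B}"
proof -
  let ?S = "{p \<in> PD_lat n q a0 a1. fst p \<le> A \<and> coord1 n q p \<le> B}"
  let ?coords = "\<lambda>p. (fst p, coord1 n q p)"
  have "?coords ` ?S \<subseteq> {- a0..A} \<times> {- a1..B}"
    by (auto simp: PD_lat_iff)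
  then have "finite (?coords ` ?S)"
    by (rule finite_subset) simp
  moreover have "inj_on ?coords ?S"
    by (intro inj_onI coord1_eq_imp_eq[OF assms]) auto
  ultimately show ?thesis
    by (rule finite_imageD)
qed

lemma finite_PD_lat_level:
  assumes "n > 0" "0 < c" "m \<in> PD_lat n q a0 a1"
  shows "finite {p \<in> PD_lat n q a0 a1.
           real_of_int (fst p - fst m) + c * real_of_int (coord1 n q p - coord1 n q m) = 0}"
proof (rule finite_subset[OF _ finite_PD_lat_bounded[OF \<open>n > 0\<close>]])
  show "{p \<in> PD_lat n q a0 a1.
           real_of_int (fst p - fst m) + c * real_of_int (coord1 n q p - coord1 n q m) = 0}
      \<subseteq> {p \<in> PD_lat n q a0 a1. fst p \<le> fst m + \<lceil>c * real_of_int (coord1 n q m + a1)\<rceil>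
            \<and> coord1 n q p \<le> coord1 n q m + \<lceil>real_of_int (fst m + a0) / c\<rceil>}"
  proof safe
    fix p assume p: "p \<in> PD_lat n q a0 a1"
      and level: "real_of_int (fst p - fst m) + c * real_of_int (coord1 n q p - coord1 n q m) = 0"
    have lo: "- a0 \<le> fst p" "- a1 \<le> coord1 n q p"
      using p by (auto simp: PD_lat_iff)
    have "c * real_of_int (- a1 - coord1 n q m) \<le> c * real_of_int (coord1 n q p - coord1 n q m)"
      using lo \<open>0 < c\<close> by (intro mult_left_mono) auto
    then have "real_of_int (fst p - fst m) \<le> c * real_of_int (coord1 n q m + a1)"
      using level by (simp add: algebra_simps)
    then show "fst p \<le> fst m + \<lceil>c * real_of_int (coord1 n q m + a1)\<rceil>"
      by linarith
    have "c * real_of_int (coord1 n q p - coord1 n q m) \<le> real_of_int (fst m + a0)"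
      using level lo by linarith
    then have "real_of_int (coord1 n q p - coord1 n q m) \<le> real_of_int (fst m + a0) / c"
      using \<open>0 < c\<close> by (simp add: le_divide_eq mult.commute)
    then show "coord1 n q p \<le> coord1 n q m + \<lceil>real_of_int (fst m + a0) / c\<rceil>"
      by linarith
  qed
qed

lemma minimal_points_subset_Gset:
  assumes "n > 0"
  shows "minimal_points n q a0 a1 \<subseteq> Gset n q a0 a1"
proof
  fix m assume m: "m \<in> minimal_points n q a0 a1"
  then have m_PD: "m \<in> PD_lat n q a0 a1"
    by (simp add: minimal_points_def)
  obtain c :: real where "0 < c" and supp: "\<And>p. p \<in> PD_lat n q a0 a1 \<Longrightarrow>
      0 \<le> real_of_int (fst p - fst m) + c * real_of_int (coord1 n q p - coord1 n q m)"
    using minimal_point_supporting_slope[OF m] by blast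
  define L where "L = realpt ` PD_lat n q a0 a1"
  define a :: "real \<times> real" where "a = (1 - c * real_of_int q, c * real_of_int n)"
  define k where "k = a \<bullet> realpt m"
  have a_realpt: "a \<bullet> realpt p - k
      = real_of_int (fst p - fst m) + c * real_of_int (coord1 n q p - coord1 n q m)" for p
    by (simp add: k_def a_def realpt_def coord1_def algebra_simps)
  have L_ge: "k \<le> a \<bullet> x" if x: "x \<in> L" for x
  proof -
    obtain p where p: "p \<in> PD_lat n q a0 a1" "x = realpt p"
      using x unfolding L_def by blast
    have "0 \<le> a \<bullet> realpt p - k"
      unfolding a_realpt using p(1) by (rule supp)
    then show ?thesis
      using p(2) by simp
  qed
  have "L \<inter> {x. a \<bullet> x = k} \<subseteq> realpt ` {p \<in> PD_lat n q a0 a1.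
      real_of_int (fst p - fst m) + c * real_of_int (coord1 n q p - coord1 n q m) = 0}"
  proof
    fix x assume "x \<in> L \<inter> {x. a \<bullet> x = k}"
    then obtain p where p: "p \<in> PD_lat n q a0 a1" "x = realpt p" "a \<bullet> realpt p = k"
      unfolding L_def by auto
    then have "real_of_int (fst p - fst m) + c * real_of_int (coord1 n q p - coord1 n q m) = 0"
      using a_realpt[of p] by linarith
    then show "x \<in> realpt ` {p \<in> PD_lat n q a0 a1.
        real_of_int (fst p - fst m) + c * real_of_int (coord1 n q p - coord1 n q m) = 0}"
      using p(1,2) by blast
  qed
  then have "finite (L \<inter> {x. a \<bullet> x = k})"
    using finite_PD_lat_level[OF \<open>n > 0\<close> \<open>0 < c\<close> m_PD] by (meson finite_imageI finite_subset)
  moreover have "realpt m \<in> convex hull L \<inter> {x. a \<bullet> x = k}"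
    using m_PD by (auto simp: L_def k_def intro: hull_inc)
  ultimately show "m \<in> Gset n q a0 a1"
    using compact_face_of_finite_level[OF L_ge] unfolding Gset_def L_def by blast
qed

theorem Gset_eq_minimal_points:
  assumes "n > 0"
  shows "Gset n q a0 a1 = minimal_points n q a0 a1"
  using Gset_subset_minimal_points minimal_points_subset_Gset[OF assms] by blast

section \<open>The presentation of \<open>\<Gamma>(D)\<close>\<close>

lemma xmon_uminus_mult_princ:
  assumes "g \<in> princ n q u"
  shows "xmon (- u) * g \<in> Rring n q"
  using assms by (auto simp: princ_def xmon_uminus_cancel)

lemma Rring_diff: "f \<in> Rring n q \<Longrightarrow> g \<in> Rring n q \<Longrightarrow> f - g \<in> Rring n q"
  unfolding Rring_def using keys_diff[of f g] by blast

lemma Rring_zero: "0 \<in> Rring n q"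
  by (simp add: Rring_def)

text \<open>Elements of the direct sums are sequences of Laurent polynomials indexed by \<open>nat\<close> and
  vanishing outside the index range; \<open>gen_map\<close> and \<open>syz_map\<close> are the maps \<open>\<pi>\<close> and \<open>\<iota>\<close>.\<close>
definition free_module :: "int \<Rightarrow> int \<Rightarrow> nat \<Rightarrow> (nat \<Rightarrow> lpoly) set" where
  "free_module n q r = {f. (\<forall>i\<le>r. f i \<in> Rring n q) \<and> (\<forall>i>r. f i = 0)}"

definition syzygy_module :: "int \<Rightarrow> int \<Rightarrow> nat \<Rightarrow> (nat \<Rightarrow> lat) \<Rightarrow> (nat \<Rightarrow> lpoly) set" where
  "syzygy_module n q r u = {g. (\<forall>i\<in>{1..r}. g i \<in> princ n q (u (i - 1)) \<inter> princ n q (u i))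
     \<and> (\<forall>i. i \<notin> {1..r} \<longrightarrow> g i = 0)}"

definition gen_map :: "nat \<Rightarrow> (nat \<Rightarrow> lat) \<Rightarrow> (nat \<Rightarrow> lpoly) \<Rightarrow> lpoly" where
  "gen_map r u f = (\<Sum>i\<le>r. xmon (u i) * f i)"

definition syz_map :: "nat \<Rightarrow> (nat \<Rightarrow> lat) \<Rightarrow> (nat \<Rightarrow> lpoly) \<Rightarrow> nat \<Rightarrow> lpoly" where
  "syz_map r u g j = (\<Sum>i\<in>{1..r}. (if j = i then xmon (- u i) * g i
     else if j = i - 1 then - (xmon (- u (i - 1)) * g i) else 0))"

lemma syz_map_eq:
  "syz_map r u g j = (if 1 \<le> j \<and> j \<le> r then xmon (- u j) * g j else 0)
     - (if j + 1 \<le> r then xmon (- u j) * g (j + 1) else 0)"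
proof -
  have "syz_map r u g j = (\<Sum>i\<in>{1..r}. (if i = j then xmon (- u i) * g i else 0)
      + (if i = j + 1 then - (xmon (- u (i - 1)) * g i) else 0))"
    unfolding syz_map_def
  proof (rule sum.cong[OF refl])
    fix i assume "i \<in> {1..r}"
    then have "(j = i - 1) = (i = j + 1)"
      by auto
    then show "(if j = i then xmon (- u i) * g i else if j = i - 1 then - (xmon (- u (i - 1)) * g i) else 0)
      = (if i = j then xmon (- u i) * g i else 0) + (if i = j + 1 then - (xmon (- u (i - 1)) * g i) else 0)"
      by (cases "i = j"; cases "i = j + 1") auto
  qed
  also have "\<dots> = (if 1 \<le> j \<and> j \<le> r then xmon (- u j) * g j else 0)
      - (if j + 1 \<le> r then xmon (- u j) * g (j + 1) else 0)"
    by (simp add: sum.distrib)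
  finally show ?thesis .
qed

lemma syz_map_in_free_module:
  assumes "g \<in> syzygy_module n q r u"
  shows "syz_map r u g \<in> free_module n q r"
proof -
  have "syz_map r u g j \<in> Rring n q" for j
  proof -
    have "(if 1 \<le> j \<and> j \<le> r then xmon (- u j) * g j else 0) \<in> Rring n q"
      using assms xmon_uminus_mult_princ Rring_zero by (auto simp: syzygy_module_def)
    moreover have "(if j + 1 \<le> r then xmon (- u j) * g (j + 1) else 0) \<in> Rring n q"
    proof (cases "j + 1 \<le> r")
      case True
      then have "j + 1 \<in> {1..r}"
        by simp
      then have "g (j + 1) \<in> princ n q (u (j + 1 - 1))"
        using assms unfolding syzygy_module_def by blast
      then show ?thesis
        using True xmon_uminus_mult_princ by simp
    qed (simp add: Rring_zero)
    ultimately show ?thesis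
      unfolding syz_map_eq by (rule Rring_diff)
  qed
  moreover have "syz_map r u g j = 0" if "r < j" for j
    using that by (simp add: syz_map_eq)
  ultimately show ?thesis
    unfolding free_module_def by blast
qed

lemma inj_on_syz_map: "inj_on (syz_map r u) (syzygy_module n q r u)"
proof (rule inj_onI)
  fix g g' assume g: "g \<in> syzygy_module n q r u" and g': "g' \<in> syzygy_module n q r u"
    and eq: "syz_map r u g = syz_map r u g'"
  have "g i = g' i" for i
  proof (induction i)
    case 0
    then show ?case
      using g g' by (simp add: syzygy_module_def)
  next
    case (Suc i)
    show ?case
    proof (cases "Suc i \<le> r")
      case True
      have "syz_map r u g i = syz_map r u g' i"
        using eq by simp
      then have "xmon (- u i) * g (i + 1) = xmon (- u i) * g' (i + 1)"
        unfolding syz_map_eq Suc.IH using True by simp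
      then show ?thesis
        by (simp add: xmon_mult_left_cancel)
    qed (use g g' in \<open>simp add: syzygy_module_def\<close>)
  qed
  then show "g = g'" ..
qed

lemma gen_map_syz_map: "gen_map r u (syz_map r u g) = 0"
proof -
  have "xmon (u j) * syz_map r u g j
      = (if 1 \<le> j then g j else 0) - (if j + 1 \<le> r then g (j + 1) else 0)" if "j \<le> r" for j
    using that by (cases "1 \<le> j"; cases "j + 1 \<le> r")
      (simp_all add: syz_map_eq right_diff_distrib xmon_uminus_cancel)
  then have "gen_map r u (syz_map r u g)
      = (\<Sum>j\<le>r. if 1 \<le> j then g j else 0) - (\<Sum>j\<le>r. if j + 1 \<le> r then g (j + 1) else 0)"
    unfolding gen_map_def sum_subtractf[symmetric] by (intro sum.cong) auto
  moreover have "(\<Sum>j\<le>r. if 1 \<le> j then g j else 0) = (\<Sum>j<r. g (Suc j))"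
  proof -
    have "{j \<in> {..r}. 1 \<le> j} = {Suc 0..r}"
      by auto
    then show ?thesis
      by (simp add: sum.inter_filter[symmetric] sum.atLeast1_atMost_eq)
  qed
  moreover have "(\<Sum>j\<le>r. if j + 1 \<le> r then g (j + 1) else 0) = (\<Sum>j<r. g (Suc j))"
  proof -
    have "{j \<in> {..r}. j + 1 \<le> r} = {..<r}"
      by auto
    then show ?thesis
      by (simp add: sum.inter_filter[symmetric])
  qed
  ultimately show ?thesis
    by (simp only: diff_self)
qed

lemma keys_gen_sumE:
  assumes f: "f \<in> free_module n q r" and A: "A \<subseteq> {..r}"
    and w: "w \<in> Poly_Mapping.keys (\<Sum>i\<in>A. xmon (u i) * f i)"
  obtains i where "i \<in> A" "fst (u i) \<le> fst w" "coord1 n q (u i) \<le> coord1 n q w"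
proof -
  obtain i where i: "i \<in> A" "w \<in> Poly_Mapping.keys (xmon (u i) * f i)"
    using w by (rule keys_sumE)
  have "f i \<in> Rring n q"
    using f i(1) A by (auto simp: free_module_def)
  then have "0 \<le> fst (w - u i) \<and> 0 \<le> coord1 n q (w - u i)"
    using i(2) unfolding Rring_iff keys_xmon_mult by blast
  then show ?thesis
    using that i(1) by simp
qed

lemma gen_map_in_Gamma:
  assumes "f \<in> free_module n q r" and "\<And>i. i \<le> r \<Longrightarrow> u i \<in> PD_lat n q a0 a1"
  shows "gen_map r u f \<in> Gamma n q a0 a1"
  unfolding Gamma_iff
proof
  fix w assume "w \<in> Poly_Mapping.keys (gen_map r u f)"
  then obtain i where "i \<in> {..r}" "fst (u i) \<le> fst w" "coord1 n q (u i) \<le> coord1 n q w"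
    unfolding gen_map_def by (rule keys_gen_sumE[OF assms(1) order_refl])
  moreover have "u i \<in> PD_lat n q a0 a1"
    using assms(2) \<open>i \<in> {..r}\<close> by simp
  ultimately show "- a0 \<le> fst w \<and> - a1 \<le> coord1 n q w"
    unfolding PD_lat_iff by linarith
qed

lemma sum_mapp_partition:
  fixes f :: "'a \<Rightarrow>\<^sub>0 'b::comm_monoid_add"
  assumes "finite A" and "\<And>w. w \<in> Poly_Mapping.keys f \<Longrightarrow> ch w \<in> A"
  shows "(\<Sum>i\<in>A. Poly_Mapping.mapp (\<lambda>w c. if ch w = i then c else 0) f) = f"
proof (rule poly_mapping_eqI)
  fix w
  show "Poly_Mapping.lookup (\<Sum>i\<in>A. Poly_Mapping.mapp (\<lambda>w c. if ch w = i then c else 0) f) w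
      = Poly_Mapping.lookup f w"
  proof (cases "w \<in> Poly_Mapping.keys f")
    case True
    then show ?thesis
      using assms by (simp add: lookup_sum lookup_mapp when_def sum.delta')
  next
    case False
    then show ?thesis
      by (simp add: lookup_sum lookup_mapp in_keys_iff)
  qed
qed

text \<open>Each monomial of \<open>f\<close> is charged to one of the generators \<open>x\<^sup>u\<^sup>i\<close> dividing it.\<close>
lemma Gamma_subset_gen_map_image:
  assumes cover: "\<And>w. w \<in> PD_lat n q a0 a1 \<Longrightarrow>
      \<exists>i\<le>r. fst (u i) \<le> fst w \<and> coord1 n q (u i) \<le> coord1 n q w"
  shows "Gamma n q a0 a1 \<subseteq> gen_map r u ` free_module n q r"
proof
  fix f assume f: "f \<in> Gamma n q a0 a1"
  define ch where "ch w = (SOME i. i \<le> r \<and> fst (u i) \<le> fst w \<and> coord1 n q (u i) \<le> coord1 n q w)"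
    for w
  have ch: "ch w \<le> r \<and> fst (u (ch w)) \<le> fst w \<and> coord1 n q (u (ch w)) \<le> coord1 n q w"
    if "w \<in> Poly_Mapping.keys f" for w
  proof -
    have "w \<in> PD_lat n q a0 a1"
      using f that unfolding Gamma_def by blast
    then show ?thesis
      unfolding ch_def by (rule someI_ex[OF cover])
  qed
  define h where "h i = Poly_Mapping.mapp (\<lambda>w c. if ch w = i then c else 0) f" for i
  define fi where "fi i = (if i \<le> r then xmon (- u i) * h i else 0)" for i
  have "fi i \<in> Rring n q" if "i \<le> r" for i
    unfolding Rring_iff
  proof
    fix w assume "w \<in> Poly_Mapping.keys (fi i)"
    then have "w + u i \<in> Poly_Mapping.keys (h i)"
      using that by (simp add: fi_def keys_xmon_mult)
    then have "w + u i \<in> Poly_Mapping.keys f" "ch (w + u i) = i"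
      by (auto simp: h_def in_keys_iff lookup_mapp when_def split: if_splits)
    then show "0 \<le> fst w \<and> 0 \<le> coord1 n q w"
      using ch[of "w + u i"] by simp
  qed
  then have "fi \<in> free_module n q r"
    by (simp add: free_module_def fi_def)
  moreover have "gen_map r u fi = f"
    using sum_mapp_partition[of "{..r}" f ch] ch
    by (simp add: gen_map_def fi_def h_def xmon_uminus_cancel)
  ultimately show "f \<in> gen_map r u ` free_module n q r"
    by blast
qed

lemma tail_sum_in_princ:
  assumes stair: "\<And>i j. i \<le> j \<Longrightarrow> j \<le> r \<Longrightarrow>
      fst (u i) \<le> fst (u j) \<and> coord1 n q (u j) \<le> coord1 n q (u i)"
    and f: "f \<in> free_module n q r" and ker: "gen_map r u f = 0" and i: "i \<in> {1..r}"
  shows "(\<Sum>j\<in>{i..r}. xmon (u j) * f j) \<in> princ n q (u (i - 1)) \<inter> princ n q (u i)"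
proof -
  have "(\<Sum>j<i. xmon (u j) * f j) + (\<Sum>j\<in>{i..r}. xmon (u j) * f j) = gen_map r u f"
  proof -
    have "{..r} = {..<i} \<union> {i..r}" "{..<i} \<inter> {i..r} = {}"
      using i by auto
    then show ?thesis
      unfolding gen_map_def by (simp add: sum.union_disjoint)
  qed
  then have tail: "(\<Sum>j\<in>{i..r}. xmon (u j) * f j) = - (\<Sum>j<i. xmon (u j) * f j)"
    unfolding ker add_eq_0_iff .
  have "fst (u (i - 1)) \<le> fst w \<and> coord1 n q (u (i - 1)) \<le> coord1 n q w
      \<and> fst (u i) \<le> fst w \<and> coord1 n q (u i) \<le> coord1 n q w"
    if w: "w \<in> Poly_Mapping.keys (\<Sum>j\<in>{i..r}. xmon (u j) * f j)" for w
  proof -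
    have "{i..r} \<subseteq> {..r}"
      by auto
    then obtain j where j: "j \<in> {i..r}" "fst (u j) \<le> fst w" "coord1 n q (u j) \<le> coord1 n q w"
      using keys_gen_sumE[OF f _ w] by blast
    have "w \<in> Poly_Mapping.keys (\<Sum>j<i. xmon (u j) * f j)"
      using w unfolding tail keys_minus .
    moreover have "{..<i} \<subseteq> {..r}"
      using i by auto
    ultimately obtain j' where j': "j' \<in> {..<i}" "fst (u j') \<le> fst w" "coord1 n q (u j') \<le> coord1 n q w"
      using keys_gen_sumE[OF f] by blast
    have "fst (u (i - 1)) \<le> fst (u i)" "fst (u i) \<le> fst (u j)"
      "coord1 n q (u i) \<le> coord1 n q (u (i - 1))" "coord1 n q (u (i - 1)) \<le> coord1 n q (u j')"
      using stair i j(1) j'(1) by auto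
    then show ?thesis
      using j j' by linarith
  qed
  then show ?thesis
    by (simp add: princ_iff)
qed

lemma ker_gen_map_subset_syz_map_image:
  assumes stair: "\<And>i j. i \<le> j \<Longrightarrow> j \<le> r \<Longrightarrow>
      fst (u i) \<le> fst (u j) \<and> coord1 n q (u j) \<le> coord1 n q (u i)"
    and f: "f \<in> free_module n q r" and ker: "gen_map r u f = 0"
  shows "f \<in> syz_map r u ` syzygy_module n q r u"
proof -
  define tail where "tail i = (\<Sum>j\<in>{i..r}. xmon (u j) * f j)" for i
  define g where "g i = (if i \<in> {1..r} then tail i else 0)" for i
  have "g \<in> syzygy_module n q r u"
    using tail_sum_in_princ[OF stair f ker] by (simp add: syzygy_module_def g_def tail_def)
  moreover have "syz_map r u g = f"
  proof
    fix j
    show "syz_map r u g j = f j"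
    proof (cases "j \<le> r")
      case True
      have "tail 0 = 0"
        using ker by (simp add: tail_def gen_map_def atLeast0AtMost)
      then have lower: "(if 1 \<le> j \<and> j \<le> r then xmon (- u j) * g j else 0) = xmon (- u j) * tail j"
        using True by (cases j) (auto simp: g_def)
      have upper: "(if j + 1 \<le> r then xmon (- u j) * g (j + 1) else 0) = xmon (- u j) * tail (j + 1)"
        using True by (auto simp: g_def tail_def)
      have "tail j = xmon (u j) * f j + tail (j + 1)"
        unfolding tail_def using True by (subst sum.atLeast_Suc_atMost) simp_all
      then have "syz_map r u g j = xmon (- u j) * (xmon (u j) * f j)"
        unfolding syz_map_eq lower upper by (simp add: right_diff_distrib[symmetric])
      then show ?thesis
        by (simp add: xmon_uminus_cancel)
    next
      case False
      then show ?thesis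
        using f by (simp add: syz_map_eq free_module_def)
    qed
  qed
  ultimately show ?thesis
    by (metis image_eqI)
qed

lemma syz_map_image_eq_kernel:
  assumes stair: "\<And>i j. i \<le> j \<Longrightarrow> j \<le> r \<Longrightarrow>
      fst (u i) \<le> fst (u j) \<and> coord1 n q (u j) \<le> coord1 n q (u i)"
  shows "syz_map r u ` syzygy_module n q r u = {f \<in> free_module n q r. gen_map r u f = 0}"
proof
  show "syz_map r u ` syzygy_module n q r u \<subseteq> {f \<in> free_module n q r. gen_map r u f = 0}"
    using syz_map_in_free_module gen_map_syz_map by blast
  show "{f \<in> free_module n q r. gen_map r u f = 0} \<subseteq> syz_map r u ` syzygy_module n q r u"
  proof
    fix f assume "f \<in> {f \<in> free_module n q r. gen_map r u f = 0}"
    then have "f \<in> free_module n q r" "gen_map r u f = 0"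
      by simp_all
    with stair show "f \<in> syz_map r u ` syzygy_module n q r u"
      by (rule ker_gen_map_subset_syz_map_image)
  qed
qed

section \<open>Enumerations of \<open>G(D)\<close>\<close>

lemma Gset_enumeration_staircase:
  fixes u :: "nat \<Rightarrow> lat"
  assumes "n > 0" and enum: "u ` {0..r} = Gset n q a0 a1"
    and incr: "\<And>i j. i < j \<Longrightarrow> j \<le> r \<Longrightarrow> fst (u i) < fst (u j)"
    and "i \<le> j" "j \<le> r"
  shows "fst (u i) \<le> fst (u j) \<and> coord1 n q (u j) \<le> coord1 n q (u i)"
proof -
  have u_minimal: "u k \<in> minimal_points n q a0 a1" if "k \<le> r" for k
  proof -
    have "u k \<in> u ` {0..r}"
      using that by (intro imageI) simp
    then show ?thesis
      unfolding enum Gset_eq_minimal_points[OF \<open>n > 0\<close>] .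
  qed
  have "fst (u i) \<le> fst (u j)"
    using incr[of i j] assms(4,5) by (cases "i = j") auto
  moreover have "coord1 n q (u j) \<le> coord1 n q (u i)"
    using minimal_points_antimono[OF u_minimal u_minimal] assms(4,5) calculation by simp
  ultimately show ?thesis ..
qed

lemma gen_map_image_eq_Gamma:
  assumes "n > 0" and enum: "u ` {0..r} = Gset n q a0 a1"
  shows "gen_map r u ` free_module n q r = Gamma n q a0 a1"
proof
  have "u i \<in> PD_lat n q a0 a1" if "i \<le> r" for i
  proof -
    have "u i \<in> u ` {0..r}"
      using that by (intro imageI) simp
    then show ?thesis
      using enum Gset_subset_PD_lat by blast
  qed
  then show "gen_map r u ` free_module n q r \<subseteq> Gamma n q a0 a1"
    using gen_map_in_Gamma by blast
  show "Gamma n q a0 a1 \<subseteq> gen_map r u ` free_module n q r"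
  proof (rule Gamma_subset_gen_map_image)
    fix w assume "w \<in> PD_lat n q a0 a1"
    then obtain m where "m \<in> minimal_points n q a0 a1" "fst m \<le> fst w" "coord1 n q m \<le> coord1 n q w"
      using ex_minimal_point_below[OF \<open>n > 0\<close>] by blast
    then show "\<exists>i\<le>r. fst (u i) \<le> fst w \<and> coord1 n q (u i) \<le> coord1 n q w"
      using enum Gset_eq_minimal_points[OF \<open>n > 0\<close>] by (metis atLeastAtMost_iff imageE)
  qed
qed

theorem mainTheorem3:
  fixes n q a0 a1 :: int and r :: nat and u :: "nat \<Rightarrow> lat"
  assumes "0 < q" and "q < n" and "coprime q n"
    and "u ` {0..r} = Gset n q a0 a1"
    and "\<And>i j. i < j \<Longrightarrow> j \<le> r \<Longrightarrow> pair (u i) rho0 < pair (u j) rho0"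
  defines "Free \<equiv> {f :: nat \<Rightarrow> lpoly. (\<forall>i\<le>r. f i \<in> Rring n q) \<and> (\<forall>i>r. f i = 0)}"
    and "I \<equiv> (\<lambda>i. princ n q (u (i - 1)) \<inter> princ n q (u i))"
    and "Dom \<equiv> {g :: nat \<Rightarrow> lpoly. (\<forall>i\<in>{1..r}. g i \<in> princ n q (u (i - 1)) \<inter> princ n q (u i)) \<and> (\<forall>i. i \<notin> {1..r} \<longrightarrow> g i = 0)}"
    and "\<pi> \<equiv> (\<lambda>f :: nat \<Rightarrow> lpoly. \<Sum>i\<le>r. xmon (u i) * f i)"
    and "\<iota> \<equiv> (\<lambda>(g :: nat \<Rightarrow> lpoly) j. \<Sum>i\<in>{1..r}.
              (if j = i then xmon (- u i) * g i
               else if j = i - 1 then - (xmon (- u (i - 1)) * g i) else 0))"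
  shows "\<iota> ` Dom \<subseteq> Free \<and> \<pi> ` Free = Gamma n q a0 a1
         \<and> inj_on \<iota> Dom \<and> \<iota> ` Dom = {f \<in> Free. \<pi> f = 0}
         \<and> (\<forall>i\<in>{1..r}. \<exists>b0 b1. I i = Gamma n q b0 b1)"
proof -
  have n: "0 < n"
    using assms(1,2) by simp
  have stair: "fst (u i) \<le> fst (u j) \<and> coord1 n q (u j) \<le> coord1 n q (u i)"
    if "i \<le> j" "j \<le> r" for i j
    using Gset_enumeration_staircase[OF n assms(4) _ that] assms(5) by simp
  have "I i = Gamma n q (- fst (u i)) (- coord1 n q (u (i - 1)))" if "i \<in> {1..r}" for i
    unfolding assms(7) using stair[of "i - 1" i] that by (intro princ_Int_princ_eq_Gamma) auto
  moreover have "syz_map r u ` syzygy_module n q r u = {f \<in> free_module n q r. gen_map r u f = 0}"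
    using stair by (rule syz_map_image_eq_kernel)
  moreover have "Free = free_module n q r" "Dom = syzygy_module n q r u"
    "\<pi> = gen_map r u" "\<iota> = syz_map r u"
    by (simp_all add: assms(6,8-10) free_module_def syzygy_module_def gen_map_def fun_eq_iff
        syz_map_def)
  ultimately show ?thesis
    using gen_map_image_eq_Gamma[OF n assms(4)] inj_on_syz_map[of r u n q] by blast
qed

end
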